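(* Realize $\mathrm{SU}(2)\times\mathbb{R}$ as the group of matrices $(A,B,v)=\begin{pmatrix}A&B&0\\-\overline{B}&\overline{A}&0\\0&0&e^v\end{pmatrix}$ with $A,B\in\mathbb{C}$, $|A|^2+|B|^2=1$, $v\in\mathbb{R}$, and let $E_1=\tfrac12(e_{12}-e_{21})$, $E_2=\tfrac{i}{2}(e_{12}+e_{21})$, $E_3=\tfrac{i}{2}(e_{11}-e_{22})$, $E_4=e_{33}$ (with $e_{jk}$ the $3\times3$ matrix units), and $e_1=E_1$, $e_2=E_4-E_3$, $e_3=E_2$, $e_4=E_3$. For $\alpha_1^2+\alpha_2^2+\alpha_3^2=1$ and $\beta\in\mathbb{R}$ let $$\tilde\gamma_1(t)=\tilde\gamma_1(\alpha_1,\alpha_2,\alpha_3,\beta;t)=\exp\bigl(t(\alpha_1e_1+\alpha_2e_2+\alpha_3e_3+\beta e_4)\bigr)\exp(-t\beta e_4)$$ (the arclength-parametrized geodesics through $\mathrm{Id}$ of the left-invariant sub-Riemannian metric $d_1$ defined by $\mathrm{span}(e_1,e_2,e_3)$ with orthonormal basis $e_1,e_2,e_3$). Put $w_1=\sqrt{1-\alpha_2^2+(\beta-\alpha_2)^2}$, $n_1=\cos\frac{w_1t}{2}$, $m_1=\frac{1}{w_1}\sin\frac{w_1t}{2}$. If $\alpha_2\neq\pm1$, then $\tilde\gamma_1(t)=(A,B,v)(t)$ with $$A=\Bigl(n_1\cos\tfrac{\beta t}{2}+(\beta-\alpha_2)m_1\sin\tfrac{\beta t}{2}\Bigr)+\Bigl((\beta-\alpha_2)m_1\cos\tfrac{\beta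 t}{2}-n_1\sin\tfrac{\beta t}{2}\Bigr)i,$$ $$B=m_1\sqrt{1-\alpha_2^2}\Bigl[\cos\bigl(\tfrac{\beta t}{2}+\varphi_0\bigr)+i\sin\bigl(\tfrac{\beta t}{2}+\varphi_0\bigr)\Bigr],\qquad v=\alpha_2t,$$ where $\cos\varphi_0=\alpha_1/\sqrt{1-\alpha_2^2}$, $\sin\varphi_0=\alpha_3/\sqrt{1-\alpha_2^2}$. If $\alpha_2=\pm1$, then $\tilde\gamma_1(t)=(A,B,v)(t)$ with $A=e^{-i\alpha_2t/2}$, $B\equiv0$, $v=\alpha_2t$.
   Context: The matrices $E_1,\dots,E_4$ satisfy $[E_1,E_2]=E_3$, $[E_2,E_3]=E_1$, $[E_3,E_1]=E_2$, $[E_i,E_4]=0$. *)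

theory Defs
  imports "HOL-Analysis.Analysis" "HOL-Library.Numeral_Type"
begin

type_synonym cmat3 = "complex ^ 3 ^ 3"

definition munit :: "3 \<Rightarrow> 3 \<Rightarrow> cmat3" where
  "munit j k = (\<chi> a b. if a = j \<and> b = k then 1 else 0)"

definition cscale :: "complex \<Rightarrow> cmat3 \<Rightarrow> cmat3" where
  "cscale c M = (\<chi> a b. c * M $ a $ b)"

fun mpow :: "cmat3 \<Rightarrow> nat \<Rightarrow> cmat3" where
  "mpow M 0 = mat 1"
| "mpow M (Suc n) = M ** mpow M n"

definition mexp :: "cmat3 \<Rightarrow> cmat3" where
  "mexp M = (\<Sum>n. (1 / fact n) *\<^sub>R mpow M n)"

definition E1 :: cmat3 where "E1 = cscale (1/2) (munit 1 2 - munit 2 1)"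
definition E2 :: cmat3 where "E2 = cscale (\<i>/2) (munit 1 2 + munit 2 1)"
definition E3 :: cmat3 where "E3 = cscale (\<i>/2) (munit 1 1 - munit 2 2)"
definition E4 :: cmat3 where "E4 = munit 3 3"

definition e1 :: cmat3 where "e1 = E1"
definition e2 :: cmat3 where "e2 = E4 - E3"
definition e3 :: cmat3 where "e3 = E2"
definition e4 :: cmat3 where "e4 = E3"

definition SUR :: "complex \<Rightarrow> complex \<Rightarrow> real \<Rightarrow> cmat3" where
  "SUR A B v = (\<chi> a b.
     if a = 1 \<and> b = 1 then A else
     if a = 1 \<and> b = 2 then B else
     if a = 2 \<and> b = 1 then - cnj B else
     if a = 2 \<and> b = 2 then cnj A else
     if a = 3 \<and> b = 3 then complex_of_real (exp v) else 0)"

definition gamma1 :: "real \<Rightarrow> real \<Rightarrow> real \<Rightarrow> real \<Rightarrow> real \<Rightarrow> cmat3" where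
  "gamma1 \<alpha>1 \<alpha>2 \<alpha>3 \<beta> t =
     mexp (t *\<^sub>R (\<alpha>1 *\<^sub>R e1 + \<alpha>2 *\<^sub>R e2 + \<alpha>3 *\<^sub>R e3 + \<beta> *\<^sub>R e4))
     ** mexp ((- t * \<beta>) *\<^sub>R e4)"

end

(*
  Every matrix involved is block diagonal, with a 2x2 block and a 1x1 block. The 2x2 block X of
  the generator t (\<alpha>1 e1 + \<alpha>2 e2 + \<alpha>3 e3 + \<beta> e4) is trace-free with determinant
  (w1 t / 2)^2, so by Cayley-Hamilton it squares to -(w1 t / 2)^2 times the identity, and the
  exponential series splits into the cosine and sine series: the block of the exponential is
  cos (w1 t / 2) I + (sin (w1 t / 2) / (w1 t / 2)) X. The correction factor exp (-t \<beta> e4) is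
  diagonal. Multiplying out and writing (\<alpha>1, \<alpha>3) = sqrt (1 - \<alpha>2^2) (cos \<phi>0, sin \<phi>0) gives
  the formulas. If \<alpha>2 = +-1 then \<alpha>1 = \<alpha>3 = 0, and both factors are diagonal.
*)

theory Submission
  imports Defs
begin

definition bdiag :: "complex \<Rightarrow> complex \<Rightarrow> complex \<Rightarrow> complex \<Rightarrow> complex \<Rightarrow> cmat3" where
  "bdiag a b c d e = (\<chi> i j.
     if i = 1 \<and> j = 1 then a else if i = 1 \<and> j = 2 then b else
     if i = 2 \<and> j = 1 then c else if i = 2 \<and> j = 2 then d else
     if i = 3 \<and> j = 3 then e else 0)"

lemma bdiag_nth [simp]:
  "bdiag a b c d e $ 1 $ 1 = a" "bdiag a b c d e $ 1 $ 2 = b" "bdiag a b c d e $ 1 $ 3 = 0"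
  "bdiag a b c d e $ 2 $ 1 = c" "bdiag a b c d e $ 2 $ 2 = d" "bdiag a b c d e $ 2 $ 3 = 0"
  "bdiag a b c d e $ 3 $ 1 = 0" "bdiag a b c d e $ 3 $ 2 = 0" "bdiag a b c d e $ 3 $ 3 = e"
  by (simp_all add: bdiag_def)

lemma bdiag_eq_iff:
  "bdiag a b c d e = bdiag a' b' c' d' e' \<longleftrightarrow> a = a' \<and> b = b' \<and> c = c' \<and> d = d' \<and> e = e'"
  by (auto simp: vec_eq_iff forall_3)

lemma bdiag_mult:
  "bdiag a b c d e ** bdiag a' b' c' d' e' =
   bdiag (a * a' + b * c') (a * b' + b * d') (c * a' + d * c') (c * b' + d * d') (e * e')"
  by (simp add: vec_eq_iff forall_3 matrix_matrix_mult_def sum_3)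

lemma mat_1_eq_bdiag: "mat 1 = bdiag 1 0 0 1 1"
  by (simp add: vec_eq_iff forall_3 mat_def)

lemma scaleR_bdiag:
  "r *\<^sub>R bdiag a b c d e = bdiag (r *\<^sub>R a) (r *\<^sub>R b) (r *\<^sub>R c) (r *\<^sub>R d) (r *\<^sub>R e)"
  by (simp add: vec_eq_iff forall_3)

lemma SUR_eq_bdiag: "SUR A B v = bdiag A B (- cnj B) (cnj A) (exp v)"
  by (simp add: vec_eq_iff forall_3 bdiag_def SUR_def)

lemma vec_sumsI:
  fixes f :: "nat \<Rightarrow> 'a::real_normed_vector ^ 'n"
  assumes "\<And>i. (\<lambda>k. f k $ i) sums L $ i"
  shows "f sums L"
  using assms unfolding sums_def by (auto intro: vec_tendstoI)

lemma mpow_scaleR: "mpow (r *\<^sub>R M) n = r ^ n *\<^sub>R mpow M n"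
  by (induction n) (simp_all add: matrix_scalar_ac scalar_matrix_assoc mult.commute)

lemma mexp_eq_bdiagI:
  assumes "\<And>n. mpow M n = bdiag (A n) (B n) (C n) (D n) (E n)"
    and "(\<lambda>n. A n / fact n) sums a" "(\<lambda>n. B n / fact n) sums b" "(\<lambda>n. C n / fact n) sums c"
    and "(\<lambda>n. D n / fact n) sums d" "(\<lambda>n. E n / fact n) sums e"
  shows "mexp M = bdiag a b c d e"
proof -
  have entry: "((1 / fact n) *\<^sub>R mpow M n) $ i $ j = mpow M n $ i $ j / fact n" for n i j
    by (simp only: vector_scaleR_component) (simp add: scaleR_conv_of_real field_simps)
  have "(\<lambda>n. mpow M n $ i $ j / fact n) sums bdiag a b c d e $ i $ j" for i j
    using assms exhaust_3[of i] exhaust_3[of j] by auto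
  then have "(\<lambda>n. (1 / fact n) *\<^sub>R mpow M n) sums bdiag a b c d e"
    unfolding entry[symmetric] by (intro vec_sumsI) simp
  then show ?thesis
    unfolding mexp_def by (rule sums_unique[symmetric])
qed

lemma exp_converges_divide: "(\<lambda>n. z ^ n / fact n) sums exp (z :: 'a :: {real_normed_field, banach})"
  using exp_converges[of z] by (simp add: scaleR_conv_of_real divide_inverse mult.commute)

lemma mpow_bdiag_diagonal: "mpow (bdiag a 0 0 d e) n = bdiag (a ^ n) 0 0 (d ^ n) (e ^ n)"
  by (induction n) (simp_all add: mat_1_eq_bdiag bdiag_mult)

lemma mexp_bdiag_diagonal: "mexp (bdiag a 0 0 d e) = bdiag (exp a) 0 0 (exp d) (exp e)"
  by (rule mexp_eq_bdiagI[OF mpow_bdiag_diagonal]) (simp_all add: exp_converges_divide)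

definition even_coeff :: "real \<Rightarrow> nat \<Rightarrow> real" where
  "even_coeff w n = (if even n then (- w\<^sup>2) ^ (n div 2) else 0)"

definition odd_coeff :: "real \<Rightarrow> nat \<Rightarrow> real" where
  "odd_coeff w n = (if odd n then (- w\<^sup>2) ^ (n div 2) else 0)"

lemma even_coeff_Suc: "even_coeff w (Suc n) = - w\<^sup>2 * odd_coeff w n"
  by (auto simp: even_coeff_def odd_coeff_def elim: oddE)

lemma odd_coeff_Suc: "odd_coeff w (Suc n) = even_coeff w n"
  by (simp add: even_coeff_def odd_coeff_def)

lemma neg_square_power: "(- w\<^sup>2) ^ k = (- 1) ^ k * (w :: 'a :: comm_ring_1) ^ (2 * k)"
  by (simp add: power_mult power_mult_distrib[symmetric])

lemma even_coeff_sums: "(\<lambda>n. even_coeff w n * t ^ n / fact n) sums cos (w * t)"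
proof -
  have "even_coeff w n * t ^ n / fact n = cos_coeff n *\<^sub>R (w * t) ^ n" for n
  proof (cases "even n")
    case True
    then obtain k where "n = 2 * k" by blast
    then show ?thesis
      by (simp add: even_coeff_def cos_coeff_def neg_square_power power_mult_distrib)
  qed (simp add: even_coeff_def cos_coeff_def)
  then show ?thesis
    using cos_converges[of "w * t"] by simp
qed

lemma odd_coeff_sums:
  assumes "w \<noteq> 0"
  shows "(\<lambda>n. odd_coeff w n * t ^ n / fact n) sums (sin (w * t) / w)"
proof -
  have "odd_coeff w n * t ^ n / fact n = (sin_coeff n *\<^sub>R (w * t) ^ n) / w" for n
  proof (cases "even n")
    case False
    then obtain k where "n = 2 * k + 1" by (blast elim: oddE)
    then show ?thesis
      using assms by (simp add: odd_coeff_def sin_coeff_def neg_square_power power_mult_distrib)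
  qed (simp add: odd_coeff_def sin_coeff_def)
  then show ?thesis
    using sums_divide[OF sin_converges[of "w * t"], of w] by simp
qed

text \<open>The block N = [[a, b], [c, -a]] satisfies N^2 = (a^2 + b c) I = -w^2 I.\<close>

lemma mpow_bdiag_traceless:
  fixes a b c e :: complex
  assumes "a\<^sup>2 + b * c = - complex_of_real (w\<^sup>2)"
  shows "mpow (bdiag a b c (- a) e) n =
    bdiag (even_coeff w n + odd_coeff w n * a) (odd_coeff w n * b)
          (odd_coeff w n * c) (even_coeff w n - odd_coeff w n * a) (e ^ n)"
proof (induction n)
  case 0
  then show ?case by (simp add: mat_1_eq_bdiag even_coeff_def odd_coeff_def)
next
  case (Suc n)
  show ?case
    unfolding mpow.simps Suc bdiag_mult bdiag_eq_iff even_coeff_Suc odd_coeff_Suc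
      of_real_mult of_real_minus power_Suc
    using assms by algebra
qed

lemma mexp_scaleR_bdiag_traceless:
  fixes a b c e :: complex and w t :: real
  assumes det: "a\<^sup>2 + b * c = - complex_of_real (w\<^sup>2)" and "w \<noteq> 0"
  defines "s \<equiv> complex_of_real (sin (w * t) / w)"
  shows "mexp (t *\<^sub>R bdiag a b c (- a) e) =
    bdiag (complex_of_real (cos (w * t)) + s * a) (s * b) (s * c)
          (complex_of_real (cos (w * t)) - s * a) (exp (t *\<^sub>R e))"
proof (rule mexp_eq_bdiagI)
  define C where "C n = complex_of_real (even_coeff w n * t ^ n / fact n)" for n
  define S where "S n = complex_of_real (odd_coeff w n * t ^ n / fact n)" for n
  have C: "C sums complex_of_real (cos (w * t))"
    unfolding C_def by (rule sums_of_real[OF even_coeff_sums])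
  have S: "S sums s"
    unfolding S_def s_def by (rule sums_of_real[OF odd_coeff_sums[OF \<open>w \<noteq> 0\<close>]])
  let ?F = "\<lambda>n. fact n * C n" and ?G = "\<lambda>n. fact n * S n"
  show "mpow (t *\<^sub>R bdiag a b c (- a) e) n =
    bdiag (?F n + ?G n * a) (?G n * b) (?G n * c) (?F n - ?G n * a) ((t *\<^sub>R e) ^ n)" for n
    unfolding mpow_scaleR unfolding mpow_bdiag_traceless[OF det] scaleR_bdiag
    by (simp add: bdiag_eq_iff C_def S_def scaleR_conv_of_real algebra_simps power_mult_distrib)
  show "(\<lambda>n. (?F n + ?G n * a) / fact n) sums (complex_of_real (cos (w * t)) + s * a)"
    using sums_add[OF C sums_mult2[OF S]] by (simp add: add_divide_distrib)
  show "(\<lambda>n. (?F n - ?G n * a) / fact n) sums (complex_of_real (cos (w * t)) - s * a)"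
    using sums_diff[OF C sums_mult2[OF S]] by (simp add: diff_divide_distrib)
  show "(\<lambda>n. ?G n * b / fact n) sums (s * b)" "(\<lambda>n. ?G n * c / fact n) sums (s * c)"
    using sums_mult2[OF S] by (simp_all add: mult.commute)
  show "(\<lambda>n. (t *\<^sub>R e) ^ n / fact n) sums exp (t *\<^sub>R e)"
    by (rule exp_converges_divide)
qed

lemma geodesic_generator_eq_bdiag:
  "\<alpha>1 *\<^sub>R e1 + \<alpha>2 *\<^sub>R e2 + \<alpha>3 *\<^sub>R e3 + \<beta> *\<^sub>R e4 =
   bdiag (\<i> * ((\<beta> - \<alpha>2) / 2)) (Complex \<alpha>1 \<alpha>3 / 2) (- cnj (Complex \<alpha>1 \<alpha>3) / 2)
         (- (\<i> * ((\<beta> - \<alpha>2) / 2))) (complex_of_real \<alpha>2)"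
  by (simp add: vec_eq_iff forall_3 bdiag_def e1_def e2_def e3_def e4_def E1_def E2_def E3_def E4_def
      cscale_def munit_def complex_eq_iff field_simps)

lemma scaleR_e4_eq_bdiag: "r *\<^sub>R e4 = bdiag (\<i> * (r / 2)) 0 0 (- (\<i> * (r / 2))) 0"
  by (simp add: vec_eq_iff forall_3 bdiag_def e4_def E3_def cscale_def munit_def complex_eq_iff)

lemma gamma1_eq_mexp_mult:
  "gamma1 \<alpha>1 \<alpha>2 \<alpha>3 \<beta> t =
   mexp (t *\<^sub>R bdiag (\<i> * ((\<beta> - \<alpha>2) / 2)) (Complex \<alpha>1 \<alpha>3 / 2) (- cnj (Complex \<alpha>1 \<alpha>3) / 2)
                     (- (\<i> * ((\<beta> - \<alpha>2) / 2))) (complex_of_real \<alpha>2))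
   ** bdiag (exp (- \<i> * (\<beta> * t / 2))) 0 0 (exp (\<i> * (\<beta> * t / 2))) 1"
  unfolding gamma1_def geodesic_generator_eq_bdiag
  unfolding scaleR_e4_eq_bdiag mexp_bdiag_diagonal
  by (simp add: bdiag_eq_iff algebra_simps)

lemma gamma1_eq_SUR:
  fixes \<alpha>1 \<alpha>2 \<alpha>3 \<beta> t :: real
  defines "w \<equiv> sqrt (\<alpha>1\<^sup>2 + \<alpha>3\<^sup>2 + (\<beta> - \<alpha>2)\<^sup>2)"
  defines "m \<equiv> (1 / w) * sin (w * t / 2)"
  assumes "w \<noteq> 0"
  shows "gamma1 \<alpha>1 \<alpha>2 \<alpha>3 \<beta> t =
    SUR ((cos (w * t / 2) + \<i> * ((\<beta> - \<alpha>2) * m)) * exp (- \<i> * (\<beta> * t / 2)))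
        (m * Complex \<alpha>1 \<alpha>3 * exp (\<i> * (\<beta> * t / 2))) (\<alpha>2 * t)"
proof -
  let ?a = "\<i> * ((\<beta> - \<alpha>2) / 2)" and ?b = "Complex \<alpha>1 \<alpha>3 / 2"
  have "w\<^sup>2 = \<alpha>1\<^sup>2 + \<alpha>3\<^sup>2 + (\<beta> - \<alpha>2)\<^sup>2"
    unfolding w_def by simp
  then have det: "?a\<^sup>2 + ?b * (- cnj (Complex \<alpha>1 \<alpha>3) / 2) = - complex_of_real ((w / 2)\<^sup>2)"
    by (simp add: complex_eq_iff power2_eq_square field_simps)
  have "w / 2 \<noteq> 0"
    using \<open>w \<noteq> 0\<close> by simp
  have s: "complex_of_real (sin (w / 2 * t) / (w / 2)) = 2 * m"
    unfolding m_def by (simp add: field_simps)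
  have block: "mexp (t *\<^sub>R bdiag ?a ?b (- cnj (Complex \<alpha>1 \<alpha>3) / 2) (- ?a) (complex_of_real \<alpha>2)) =
    bdiag (cos (w * t / 2) + \<i> * ((\<beta> - \<alpha>2) * m)) (m * Complex \<alpha>1 \<alpha>3)
          (- (m * cnj (Complex \<alpha>1 \<alpha>3))) (cos (w * t / 2) - \<i> * ((\<beta> - \<alpha>2) * m)) (exp (\<alpha>2 * t))"
    unfolding mexp_scaleR_bdiag_traceless[OF det \<open>w / 2 \<noteq> 0\<close>] s
    by (simp add: bdiag_eq_iff scaleR_conv_of_real of_real_exp field_simps)
  show ?thesis
    unfolding gamma1_eq_mexp_mult block SUR_eq_bdiag bdiag_mult
    by (simp add: bdiag_eq_iff exp_cnj algebra_simps)
qed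

lemma gamma1_diagonal:
  "gamma1 0 \<alpha>2 0 \<beta> t = SUR (exp (- \<i> * complex_of_real (\<alpha>2 * t / 2))) 0 (\<alpha>2 * t)"
proof -
  have "Complex 0 0 = 0"
    by (simp add: complex_eq_iff)
  then have "gamma1 0 \<alpha>2 0 \<beta> t =
    bdiag (exp (\<i> * (t * ((\<beta> - \<alpha>2) / 2)))) 0 0 (exp (- (\<i> * (t * ((\<beta> - \<alpha>2) / 2))))) (exp (\<alpha>2 * t))
    ** bdiag (exp (- \<i> * (\<beta> * t / 2))) 0 0 (exp (\<i> * (\<beta> * t / 2))) 1"
    unfolding gamma1_eq_mexp_mult scaleR_bdiag
    by (simp add: mexp_bdiag_diagonal scaleR_conv_of_real of_real_exp algebra_simps)
  also have "\<dots> = SUR (exp (- \<i> * complex_of_real (\<alpha>2 * t / 2))) 0 (\<alpha>2 * t)"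
    unfolding SUR_eq_bdiag bdiag_mult
    by (simp add: bdiag_eq_iff exp_cnj exp_add[symmetric] field_simps)
  finally show ?thesis .
qed

lemma gamma1_polar_eq_SUR:
  fixes r \<phi> \<alpha>2 \<beta> t w :: real
  defines "m \<equiv> (1 / w) * sin (w * t / 2)"
  assumes w: "w = sqrt (r\<^sup>2 + (\<beta> - \<alpha>2)\<^sup>2)" and "w \<noteq> 0"
  shows "gamma1 (r * cos \<phi>) \<alpha>2 (r * sin \<phi>) \<beta> t =
    SUR (Complex (cos (w * t / 2) * cos (\<beta> * t / 2) + (\<beta> - \<alpha>2) * m * sin (\<beta> * t / 2))
                 ((\<beta> - \<alpha>2) * m * cos (\<beta> * t / 2) - cos (w * t / 2) * sin (\<beta> * t / 2)))
        (complex_of_real (m * r) *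
           (complex_of_real (cos (\<beta> * t / 2 + \<phi>)) + \<i> * complex_of_real (sin (\<beta> * t / 2 + \<phi>))))
        (\<alpha>2 * t)" (is "_ = ?rhs")
proof -
  have "(r * cos \<phi>)\<^sup>2 + (r * sin \<phi>)\<^sup>2 = r\<^sup>2"
    by (simp add: power_mult_distrib flip: distrib_left)
  then have "gamma1 (r * cos \<phi>) \<alpha>2 (r * sin \<phi>) \<beta> t =
    SUR ((cos (w * t / 2) + \<i> * ((\<beta> - \<alpha>2) * m)) * exp (- \<i> * (\<beta> * t / 2)))
        (m * Complex (r * cos \<phi>) (r * sin \<phi>) * exp (\<i> * (\<beta> * t / 2))) (\<alpha>2 * t)"
    using gamma1_eq_SUR[of "r * cos \<phi>" "r * sin \<phi>" \<beta> \<alpha>2 t] w \<open>w \<noteq> 0\<close> by (simp add: m_def)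
  also have "\<dots> = ?rhs"
    unfolding SUR_eq_bdiag bdiag_eq_iff
    by (simp add: complex_eq_iff Re_exp Im_exp cos_add sin_add algebra_simps)
  finally show ?thesis .
qed

theorem theorem4:
  fixes \<alpha>1 \<alpha>2 \<alpha>3 \<beta> t :: real
  assumes "\<alpha>1\<^sup>2 + \<alpha>2\<^sup>2 + \<alpha>3\<^sup>2 = 1"
  defines "w1 \<equiv> sqrt (1 - \<alpha>2\<^sup>2 + (\<beta> - \<alpha>2)\<^sup>2)"
  defines "n1 \<equiv> cos (w1 * t / 2)"
  defines "m1 \<equiv> (1 / w1) * sin (w1 * t / 2)"
  shows "(\<alpha>2 \<noteq> 1 \<and> \<alpha>2 \<noteq> -1 \<longrightarrow>
           (\<forall>\<phi>0. cos \<phi>0 = \<alpha>1 / sqrt (1 - \<alpha>2\<^sup>2) \<and> sin \<phi>0 = \<alpha>3 / sqrt (1 - \<alpha>2\<^sup>2) \<longrightarrow>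
              gamma1 \<alpha>1 \<alpha>2 \<alpha>3 \<beta> t =
              SUR (Complex (n1 * cos (\<beta> * t / 2) + (\<beta> - \<alpha>2) * m1 * sin (\<beta> * t / 2))
                           ((\<beta> - \<alpha>2) * m1 * cos (\<beta> * t / 2) - n1 * sin (\<beta> * t / 2)))
                  (complex_of_real (m1 * sqrt (1 - \<alpha>2\<^sup>2)) *
                     (complex_of_real (cos (\<beta> * t / 2 + \<phi>0)) + \<i> * complex_of_real (sin (\<beta> * t / 2 + \<phi>0))))
                  (\<alpha>2 * t)))
       \<and> (\<alpha>2 = 1 \<or> \<alpha>2 = -1 \<longrightarrow>
           gamma1 \<alpha>1 \<alpha>2 \<alpha>3 \<beta> t = SUR (exp (- \<i> * complex_of_real (\<alpha>2 * t / 2))) 0 (\<alpha>2 * t))"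
proof (intro conjI impI allI, goal_cases generic diagonal)
  case (generic \<phi>0)
  define r where "r = sqrt (1 - \<alpha>2\<^sup>2)"
  have "\<alpha>2\<^sup>2 < 1"
    using generic(1) assms(1) by (smt (verit) power2_eq_1_iff zero_le_power2)
  then have "r > 0" and r2: "r\<^sup>2 = 1 - \<alpha>2\<^sup>2"
    by (simp_all add: r_def)
  have \<alpha>: "\<alpha>1 = r * cos \<phi>0" "\<alpha>3 = r * sin \<phi>0"
    using generic(2) \<open>r > 0\<close> by (simp_all add: r_def)
  have w1: "w1 = sqrt (r\<^sup>2 + (\<beta> - \<alpha>2)\<^sup>2)"
    by (simp add: w1_def r2)
  have "w1 \<noteq> 0"
    using \<open>r > 0\<close> by (simp add: w1 add_pos_nonneg)
  show ?case
    unfolding \<alpha> n1_def m1_def r_def[symmetric] using w1 \<open>w1 \<noteq> 0\<close> by (rule gamma1_polar_eq_SUR)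
next
  case diagonal
  then have "\<alpha>1\<^sup>2 + \<alpha>3\<^sup>2 = 0"
    using assms(1) by auto
  then show ?case
    by (simp add: sum_power2_eq_zero_iff gamma1_diagonal)
qed

end
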